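(* For every integer $t\ge2$, $$-\frac{71}{100t}<\frac{S_3(t)}{\binom{-3/2}{t}}+\frac{(-1)^t}{\binom{-3/2}{t}}\alpha\sinh\alpha+1-\cosh\alpha<\frac{12}{25t}.$$
   Context: $\alpha=\pi/6$. $(a)_m=a(a+1)\cdots(a+m-1)$ is the rising factorial ($(a)_0=1$); $\binom{x}{m}=x(x-1)\cdots(x-m+1)/m!$ for $m\ge1$, $\binom{x}{0}=1$. For $t\ge2$, $$S_3(t)=\sum_{s=1}^t\frac{(1/2-s)_{s+1}\binom{-3/2}{t-s}}{s}\sum_{u=1}^s\frac{(-1)^u(-s)_u}{(s+u)!\,(2u-1)!}\left(\frac{\pi^2}{36}\right)^u.$$ *)

theory Defs
  imports Complex_Main
begin

definition alpha :: real where "alpha = pi / 6"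

definition S3 :: "nat \<Rightarrow> real" where
  "S3 t = (\<Sum>s=1..t. pochhammer (1/2 - real s) (s + 1) * ((-3/2::real) gchoose (t - s)) / real s
      * (\<Sum>u=1..s. (-1)^u * pochhammer (- real s) u / (fact (s + u) * fact (2*u - 1))
          * (pi^2 / 36)^u))"

end

theory Submission
  imports Defs "HOL-Computational_Algebra.Formal_Power_Series" "HOL-Analysis.Complex_Transcendental"
begin

text \<open>
  Write x = alpha^2 = pi^2/36 and Y = (1 - sqrt(1 - z))^2. The powers of Y have the ballot-number
  coefficients [z^n] Y^u = 2u (2n-2u-1)! / ((n-2u)! n! 4^(n-u)), and with this formula the inner sum
  of S3(t) turns into a convolution: (-1)^t S3(t) = sum over u >= 1 of x^u/(2u)! [z^(t+u)] Y^u (1-z)^(-3/2).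
  Expanding Y^u = (1 - sqrt(1 - z))^(2u) binomially, the odd powers of sqrt(1 - z) contribute exactly
  -2u, which cancels against alpha sinh alpha = sum of 2u x^u/(2u)!, while the even powers give
  [z^(t+u)] (1-z)^(i-3/2), which is [z^t] (1-z)^(-3/2) up to a relative error of order i!/t.
  Since also cosh alpha = sum of x^u/(2u)!, the normalised expression of the theorem is the series
  sum of x^u/(2u)! T_u(t), where |T_u(t)| <= (5/4)^u (u + sum_i C(2u,2i) i!)/(2t); the fast decay of
  x^u/(2u)! then bounds it by 0.36/t.
\<close>

unbundle fps_syntax

section \<open>The power series \<open>(1 - X)\<^sup>c\<close>\<close>

definition fps_one_minus_X_powr :: "'a::field_char_0 \<Rightarrow> 'a fps" where
  "fps_one_minus_X_powr c = fps_binomial c oo - fps_X"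

lemma fps_one_minus_X_powr_nth: "fps_one_minus_X_powr c $ n = (-1)^n * (c gchoose n)"
  by (simp add: fps_one_minus_X_powr_def fps_compose_uminus')

lemma fps_one_minus_X_powr_add:
  "fps_one_minus_X_powr (a + b) = fps_one_minus_X_powr a * fps_one_minus_X_powr b"
  by (simp add: fps_one_minus_X_powr_def fps_binomial_add_mult fps_compose_mult_distrib)

lemma fps_one_minus_X_powr_power:
  "fps_one_minus_X_powr c ^ n = fps_one_minus_X_powr (of_nat n * c)"
  by (simp add: fps_one_minus_X_powr_def fps_binomial_power fps_compose_power)

lemma fps_one_minus_X_powr_1: "fps_one_minus_X_powr 1 = 1 - fps_X"
  by (simp add: fps_one_minus_X_powr_def fps_binomial_1 fps_compose_add_distrib)

lemma fps_one_minus_X_powr_of_nat_nth: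
  "k < n \<Longrightarrow> fps_one_minus_X_powr (of_nat k) $ n = 0"
  by (simp add: fps_one_minus_X_powr_nth binomial_gbinomial [symmetric] binomial_eq_0)

lemma fps_one_minus_X_powr_minus_1_nth: "fps_one_minus_X_powr (-1) $ n = 1"
  by (simp add: fps_one_minus_X_powr_nth gbinomial_minus [of 1] power_mult_distrib [symmetric]
      flip: binomial_gbinomial)

section \<open>Coefficients of the powers of \<open>(1 - \<surd>(1 - X))\<^sup>2\<close>\<close>

definition fps_Y :: "real fps" where
  "fps_Y = (1 - fps_one_minus_X_powr (1/2))^2"

lemma fps_Y_eq: "fps_Y = 2 - fps_X - 2 * fps_one_minus_X_powr (1/2)"
proof -
  have "fps_Y = 1 - 2 * fps_one_minus_X_powr (1/2) + fps_one_minus_X_powr (1/2) ^ 2"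
    by (simp add: fps_Y_def power2_eq_square algebra_simps)
  also have "fps_one_minus_X_powr (1/2::real) ^ 2 = 1 - fps_X"
    by (simp add: fps_one_minus_X_powr_power fps_one_minus_X_powr_1)
  finally show ?thesis
    by (simp add: algebra_simps)
qed

lemma fps_Y_quadratic: "fps_Y^2 = 2 * (2 - fps_X) * fps_Y - fps_X^2"
proof -
  have "fps_Y^2 - (2 * (2 - fps_X) * fps_Y - fps_X^2) = 4 * (fps_one_minus_X_powr (1/2) ^ 2 - (1 - fps_X))"
    by (simp add: fps_Y_eq power2_eq_square algebra_simps)
  also have "fps_one_minus_X_powr (1/2::real) ^ 2 = 1 - fps_X"
    by (simp add: fps_one_minus_X_powr_power fps_one_minus_X_powr_1)
  finally show ?thesis
    by simp
qed

lemma pochhammer_half: "pochhammer (1/2) k = (fact (2 * k) / (4^k * fact k) :: 'a::field_char_0)"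
proof -
  have "(2::'a)^(2 * k) = 4^k"
    by (simp add: power_mult)
  then show ?thesis
    using fact_double [of k, where 'a='a] by (simp add: field_simps)
qed

lemma pochhammer_minus_half_Suc:
  "pochhammer (- (1/2)) (Suc k) = (- fact (2 * k) / (2 * 4^k * fact k) :: 'a::field_char_0)"
  by (simp add: pochhammer_rec pochhammer_half)

lemma gbinomial_half_Suc:
  "((1/2::'a::field_char_0) gchoose Suc k) = (-1)^k * fact (2 * k) / (2 * 4^k * fact k * fact (Suc k))"
  unfolding gbinomial_pochhammer pochhammer_minus_half_Suc by (simp add: field_simps)

definition ballot_coeff :: "nat \<Rightarrow> nat \<Rightarrow> real" where
  "ballot_coeff u n = (if u = 0 then (if n = 0 then 1 else 0) else if n < 2 * u then 0 else
     2 * real u * fact (2 * n - 2 * u - 1) / (fact (n - 2 * u) * fact n * 4^(n - u)))"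

lemma ballot_coeff_offset:
  "0 < m + u \<Longrightarrow>
   ballot_coeff u (m + 2 * u) = 2 * real u * fact (2 * m + 2 * u - 1) / (fact m * fact (m + 2 * u) * 4^(m + u))"
  by (auto simp: ballot_coeff_def ac_simps)

lemma ballot_coeff_below: "n < 2 * u \<Longrightarrow> ballot_coeff u n = 0"
  by (simp add: ballot_coeff_def)

lemma fact_add_2: "(fact (n + 2) :: 'a::semiring_char_0) = of_nat (n + 2) * of_nat (n + 1) * fact n"
  by (simp add: numeral_2_eq_2 algebra_simps)

lemma ballot_coeff_recurrence_offset:
  "ballot_coeff (u + 2) (m + 2 * u + 4) =
     4 * ballot_coeff (u + 1) (m + 2 * u + 4) - 2 * ballot_coeff (u + 1) (m + 2 * u + 3) - ballot_coeff u (m + 2 * u + 2)"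
proof -
  define k where "k = 2 * m + 2 * u + 1"
  define j where "j = m + 2 * u + 2"
  have b1: "ballot_coeff (u + 2) (m + 2 * u + 4) =
      2 * real (u + 2) * fact (k + 2) / (fact m * fact (j + 2) * 4^(m + u + 2))"
    using ballot_coeff_offset [of m "u + 2"] by (simp add: k_def j_def ac_simps numeral_eq_Suc)
  have b2: "ballot_coeff (u + 1) (m + 2 * u + 4) =
      2 * real (u + 1) * fact (k + 2 + 2) / (fact (m + 2) * fact (j + 2) * (4 * 4^(m + u + 2)))"
    using ballot_coeff_offset [of "m + 2" "u + 1"] by (simp add: k_def j_def ac_simps numeral_eq_Suc)
  have b3: "ballot_coeff (u + 1) (m + 2 * u + 3) =
      2 * real (u + 1) * fact (k + 2) / (fact (m + 1) * fact (j + 1) * 4^(m + u + 2))"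
    using ballot_coeff_offset [of "m + 1" "u + 1"] by (simp add: k_def j_def ac_simps numeral_eq_Suc)
  have b4: "ballot_coeff u (m + 2 * u + 2) = 2 * real u * fact (k + 2) / (fact (m + 2) * fact j * 4^(m + u + 2))"
    using ballot_coeff_offset [of "m + 2" u] by (simp add: k_def j_def ac_simps numeral_eq_Suc)
  show ?thesis
    unfolding b1 b2 b3 b4 fact_add_2 fact_Suc [of j, folded Suc_eq_plus1] fact_Suc [of m, folded Suc_eq_plus1]
    by (simp add: divide_simps) (simp add: k_def j_def algebra_simps)
qed

text \<open>The coefficientwise form of \<open>Y\<^bsup>u+2\<^esub> = 4 Y\<^bsup>u+1\<^esub> - 2 X Y\<^bsup>u+1\<^esub> - X\<^sup>2 Y\<^sup>u\<close>.\<close>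

lemma ballot_coeff_recurrence:
  "ballot_coeff (u + 2) n = 4 * ballot_coeff (u + 1) n - (if n = 0 then 0 else 2 * ballot_coeff (u + 1) (n - 1))
     - (if n < 2 then 0 else ballot_coeff u (n - 2))"
proof -
  have diag: "ballot_coeff w (2 * w) = 1/4^w" for w
  proof (cases "w = 0")
    case False
    then have "(fact (2 * w) :: real) = 2 * real w * fact (2 * w - 1)"
      by (simp add: fact_reduce [of "2 * w"])
    then show ?thesis
      using ballot_coeff_offset [of 0 w] False by simp
  qed (simp add: ballot_coeff_def)
  have diag1: "ballot_coeff w (2 * w + 1) = 2 * real w / 4^(w + 1)" for w
  proof (cases "w = 0")
    case False
    then have "ballot_coeff w (2 * w + 1) = 2 * real w * fact (2 * w + 1) / (fact (2 * w + 1) * 4^(w + 1))"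
      using ballot_coeff_offset [of 1 w] by (simp add: ac_simps)
    then show ?thesis
      by simp
  qed (simp add: ballot_coeff_def)
  consider "n < 2 * u + 2" | "n = 2 * u + 2" | "n = 2 * u + 3" | "2 * u + 4 \<le> n"
    by linarith
  then show ?thesis
  proof cases
    case 1
    then show ?thesis by (simp add: ballot_coeff_below)
  next
    case 2
    then show ?thesis
      using diag [of u] diag [of "u + 1"] by (simp add: ballot_coeff_below)
  next
    case 3
    have n: "n = Suc (Suc (Suc (2 * u)))" using 3 by simp
    have a: "ballot_coeff (u + 1) n = 2 * real (u + 1) / 4^(u + 2)"
      using diag1 [of "u + 1"] n by simp
    have b: "ballot_coeff (u + 1) (n - 1) = 1/4^(u + 1)"
      using diag [of "u + 1"] n by simp
    have c: "ballot_coeff u (n - 2) = 2 * real u / 4^(u + 1)"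
      using diag1 [of u] n by simp
    have z: "ballot_coeff (u + 2) n = 0" "n \<noteq> 0" "\<not> n < 2"
      using 3 by (simp_all add: ballot_coeff_below)
    show ?thesis
      unfolding a b c z(1) by (simp only: z(2,3) if_False) (simp add: field_simps)
  next
    case 4
    define m where "m = n - (2 * u + 4)"
    with 4 have "n = m + 2 * u + 4"
      by simp
    then show ?thesis
      using ballot_coeff_recurrence_offset [of u m] by (simp add: numeral_eq_Suc)
  qed
qed

lemma fps_Y_nth: "fps_Y $ n = ballot_coeff 1 n"
proof (cases "n < 2")
  case True
  then have "n = 0 \<or> n = 1"
    by auto
  then show ?thesis
    by (auto simp: fps_Y_eq fps_one_minus_X_powr_nth ballot_coeff_def)
next
  case False
  define j where "j = n - 2"
  with False have n: "n = Suc (Suc j)"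
    by simp
  have "fps_Y $ n = - 2 * ((1/2) gchoose Suc (Suc j)) * (-1)^j"
    by (simp add: n fps_Y_eq fps_one_minus_X_powr_nth numeral_fps_const)
  also have "\<dots> = fact (2 * Suc j) / (4^(Suc j) * fact (Suc j) * fact (Suc (Suc j)))"
    unfolding gbinomial_half_Suc by (simp add: mult_ac)
  also have "\<dots> = 2 * fact (2 * j + 1) / (fact j * fact (j + 2) * 4^(j + 1))"
  proof -
    define F G H where "F = (fact (2 * j + 1) :: real)" and "G = (fact j :: real)" and "H = (fact (j + 2) :: real)"
    have e: "(fact (2 * Suc j) :: real) = 2 * (real j + 1) * F" "fact (Suc j) = (real j + 1) * G"
      "fact (Suc (Suc j)) = H"
      by (simp_all add: F_def G_def H_def algebra_simps)
    have "G \<noteq> 0" "H \<noteq> 0"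
      by (simp_all add: G_def H_def)
    then show ?thesis
      unfolding e F_def [symmetric] G_def [symmetric] H_def [symmetric] by (simp add: divide_simps)
  qed
  also have "\<dots> = ballot_coeff 1 n"
    using ballot_coeff_offset [of j 1] by (simp add: n)
  finally show ?thesis .
qed

lemma fps_Y_power_nth: "(fps_Y ^ u) $ n = ballot_coeff u n"
proof (induction u arbitrary: n rule: induct_nat_012)
  case 0
  then show ?case
    by (simp add: ballot_coeff_def)
next
  case 1
  then show ?case
    by (simp add: fps_Y_nth)
next
  case (ge2 u)
  have "fps_Y ^ Suc (Suc u) = fps_Y ^ u * fps_Y ^ 2"
    by (simp add: power_add [symmetric])
  also have "\<dots> = 4 * fps_Y ^ Suc u - 2 * (fps_X * fps_Y ^ Suc u) - fps_X^2 * fps_Y ^ u"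
    unfolding fps_Y_quadratic by (simp add: algebra_simps)
  finally show ?case
    using ballot_coeff_recurrence [of u n]
    by (simp add: ge2.IH fps_X_power_mult_nth numeral_fps_const del: power_Suc)
qed

section \<open>Two expressions for the coefficients of \<open>Y\<^sup>u (1 - X)\<^bsup>-3/2\<^esub>\<close>\<close>

lemma fps_Y_power_times_nth_conv:
  "(fps_Y ^ u * fps_one_minus_X_powr (-3/2)) $ (t + u) =
     (\<Sum>s=u..t. ballot_coeff u (s + u) * fps_one_minus_X_powr (-3/2) $ (t - s))"
proof -
  have "(fps_Y ^ u * fps_one_minus_X_powr (-3/2)) $ (t + u) =
      (\<Sum>n=0..t+u. ballot_coeff u n * fps_one_minus_X_powr (-3/2) $ (t + u - n))"
    by (simp add: fps_mult_nth fps_Y_power_nth)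
  also have "\<dots> = (\<Sum>n=u+u..t+u. ballot_coeff u n * fps_one_minus_X_powr (-3/2) $ (t + u - n))"
    by (rule sum.mono_neutral_right) (auto simp: ballot_coeff_below)
  also have "\<dots> = (\<Sum>s=u..t. ballot_coeff u (s + u) * fps_one_minus_X_powr (-3/2) $ (t + u - (s + u)))"
    by (rule sum.shift_bounds_cl_nat_ivl)
  finally show ?thesis
    by simp
qed

lemma sum_atMost_double:
  "sum f {..2 * (u::nat)} = (\<Sum>i\<le>u. f (2 * i)) + (\<Sum>i<u. f (2 * i + 1))"
  by (induction u) (simp_all add: numeral_eq_Suc ac_simps)

lemma fps_Y_power_expansion:
  "fps_Y ^ u * fps_one_minus_X_powr (-3/2) =
     (\<Sum>k\<le>2 * u. fps_const (real (2 * u choose k) * (-1)^k) * fps_one_minus_X_powr (real k / 2 - 3/2))"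
proof -
  have "fps_Y ^ u = (\<Sum>k\<le>2 * u. of_nat (2 * u choose k) * (- fps_one_minus_X_powr (1/2)) ^ k)"
    using binomial_ring [of "- fps_one_minus_X_powr (1/2::real)" 1 "2 * u"]
    by (simp add: fps_Y_def power_mult)
  moreover have "of_nat c * (- fps_one_minus_X_powr (1/2)) ^ k * fps_one_minus_X_powr (-3/2) =
      fps_const (real c * (-1)^k) * fps_one_minus_X_powr (real k / 2 - 3/2)" for c k
  proof -
    have "fps_one_minus_X_powr (1/2) ^ k * fps_one_minus_X_powr (-3/2) = fps_one_minus_X_powr (real k / 2 - 3/2)"
      by (simp add: fps_one_minus_X_powr_power flip: fps_one_minus_X_powr_add)
    moreover have "(-1 :: real fps) ^ k = fps_const ((-1)^k)"
      by (induction k) simp_all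
    ultimately show ?thesis
      by (simp add: power_minus [of "fps_one_minus_X_powr (1/2)"] fps_of_nat [symmetric] mult.assoc)
  qed
  ultimately show ?thesis
    by (simp add: sum_distrib_right)
qed

lemma fps_Y_power_times_nth_binomial:
  assumes "u \<le> n"
  shows "(fps_Y ^ u * fps_one_minus_X_powr (-3/2)) $ n =
           (\<Sum>i\<le>u. real (2 * u choose (2 * i)) * fps_one_minus_X_powr (real i - 3/2) $ n) - 2 * real u"
proof -
  have odd_term: "real (2 * u choose (2 * i + 1)) * fps_one_minus_X_powr (real i - 1) $ n =
      (if i = 0 then 2 * real u else 0)" if "i < u" for i
  proof (cases "i = 0")
    case False
    then have "fps_one_minus_X_powr (real i - 1) $ n = 0"
      using that assms fps_one_minus_X_powr_of_nat_nth [of "i - 1" n, where 'a=real] by (simp add: of_nat_diff)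
    then show ?thesis
      using False by simp
  qed (simp add: fps_one_minus_X_powr_minus_1_nth)
  have "(fps_Y ^ u * fps_one_minus_X_powr (-3/2)) $ n =
      (\<Sum>k\<le>2 * u. real (2 * u choose k) * (-1)^k * fps_one_minus_X_powr (real k / 2 - 3/2) $ n)"
    unfolding fps_Y_power_expansion by (simp add: fps_sum_nth)
  also have "\<dots> = (\<Sum>i\<le>u. real (2 * u choose (2 * i)) * fps_one_minus_X_powr (real i - 3/2) $ n)
      - (\<Sum>i<u. real (2 * u choose (2 * i + 1)) * fps_one_minus_X_powr (real i - 1) $ n)"
  proof -
    have "real (2 * i) / 2 - 3/2 = real i - 3/2" "real (2 * i + 1) / 2 - 3/2 = real i - 1" for i
      by (simp_all add: field_simps)
    then show ?thesis
      by (simp add: sum_atMost_double sum_negf)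
  qed
  also have "(\<Sum>i<u. real (2 * u choose (2 * i + 1)) * fps_one_minus_X_powr (real i - 1) $ n) =
      (\<Sum>i<u. if i = 0 then 2 * real u else 0)"
    by (intro sum.cong refl odd_term) simp
  also have "\<dots> = 2 * real u"
    by simp
  finally show ?thesis .
qed

section \<open>Rewriting \<open>S\<^sub>3\<close>\<close>

lemma pochhammer_minus_of_nat:
  assumes "u \<le> s"
  shows "(-1)^u * pochhammer (- of_nat s) u = (fact s / fact (s - u) :: 'a::field_char_0)"
proof -
  have "(of_nat s gchoose u :: 'a) = fact s / (fact u * fact (s - u))"
    using binomial_fact [OF assms, where 'a='a] by (simp add: binomial_gbinomial)
  then have "pochhammer (of_nat s - of_nat u + 1) u = (fact s / fact (s - u) :: 'a)"
    by (simp add: gbinomial_pochhammer' field_simps)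
  then show ?thesis
    by (simp add: pochhammer_minus)
qed

lemma pochhammer_half_minus_of_nat:
  "pochhammer (1/2 - of_nat s) (s + 1) = ((-1)^s * fact (2 * s) / (2 * 4^s * fact s) :: 'a::field_char_0)"
proof -
  have "pochhammer (- (of_nat s - 1/2)) (Suc s) = (-1)^Suc s * (pochhammer (- (1/2)) (Suc s) :: 'a)"
    by (simp add: pochhammer_minus)
  then show ?thesis
    by (simp add: pochhammer_minus_half_Suc)
qed

lemma S3_summand_eq:
  assumes "1 \<le> u" "u \<le> s"
  shows "pochhammer (1/2 - real s) (s + 1) / real s
           * ((-1)^u * pochhammer (- real s) u / (fact (s + u) * fact (2 * u - 1)))
         = (-1)^s * ballot_coeff u (s + u) / fact (2 * u)"
proof -
  define A B C D E where "A = (fact (2 * s - 1) :: real)" and "B = (fact (2 * u - 1) :: real)"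
    and "C = (fact s :: real)" and "D = (fact (s - u) :: real)" and "E = (fact (s + u) :: real)"
  have fact_2s: "(fact (2 * s) :: real) = 2 * real s * A"
    using assms by (simp add: A_def fact_reduce [of "2 * s"])
  have fact_2u: "(fact (2 * u) :: real) = 2 * real u * B"
    using assms by (simp add: B_def fact_reduce [of "2 * u"])
  have "ballot_coeff u (s - u + 2 * u) =
      2 * real u * fact (2 * (s - u) + 2 * u - 1) / (D * fact (s - u + 2 * u) * 4^(s - u + u))"
    unfolding D_def by (rule ballot_coeff_offset) (use assms in simp)
  moreover have "s - u + 2 * u = s + u" "2 * (s - u) + 2 * u - 1 = 2 * s - 1" "s - u + u = s"
    using assms by auto
  ultimately have ballot: "ballot_coeff u (s + u) = 2 * real u * A / (D * E * 4^s)"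
    by (simp add: A_def E_def)
  have "A \<noteq> 0" "B \<noteq> 0" "C \<noteq> 0" "D \<noteq> 0" "real s \<noteq> 0" "real u \<noteq> 0"
    using assms by (auto simp: A_def B_def C_def D_def)
  then show ?thesis
    unfolding pochhammer_half_minus_of_nat pochhammer_minus_of_nat [OF assms(2)] ballot fact_2s fact_2u
      B_def [symmetric] C_def [symmetric] D_def [symmetric] E_def [symmetric]
    by (simp add: field_simps)
qed

lemma sum_triangle_swap:
  "(\<Sum>s=1..(t::nat). \<Sum>u=1..s. f s u) = (\<Sum>u=1..t. \<Sum>s=u..t. f s u :: 'a::comm_monoid_add)"
proof (induction t)
  case (Suc t)
  have "(\<Sum>u=1..Suc t. \<Sum>s=u..Suc t. f s u) = (\<Sum>u=1..Suc t. (\<Sum>s=u..t. f s u) + f (Suc t) u)"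
    by (rule sum.cong) auto
  then show ?case
    using Suc by (simp add: sum.distrib)
qed simp

lemma alpha_power_double: "alpha ^ (2 * u) = (pi^2/36)^u"
  by (simp add: alpha_def power_mult power_divide)

lemma S3_eq:
  "(-1)^t * S3 t =
     (\<Sum>u=1..t. alpha^(2 * u) / fact (2 * u) * (fps_Y ^ u * fps_one_minus_X_powr (-3/2)) $ (t + u))"
proof -
  have summand: "pochhammer (1/2 - real s) (s + 1) * ((-3/2) gchoose (t - s)) / real s
      * ((-1)^u * pochhammer (- real s) u / (fact (s + u) * fact (2 * u - 1)) * (pi^2/36)^u)
    = (-1)^t * (alpha^(2 * u) / fact (2 * u) * (ballot_coeff u (s + u) * fps_one_minus_X_powr (-3/2) $ (t - s)))"
    if "1 \<le> u" "u \<le> s" "s \<le> t" for s u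
  proof -
    have "pochhammer (1/2 - real s) (s + 1) * ((-3/2) gchoose (t - s)) / real s
        * ((-1)^u * pochhammer (- real s) u / (fact (s + u) * fact (2 * u - 1)) * (pi^2/36)^u)
      = ((-3/2) gchoose (t - s)) * (pi^2/36)^u * (pochhammer (1/2 - real s) (s + 1) / real s
        * ((-1)^u * pochhammer (- real s) u / (fact (s + u) * fact (2 * u - 1))))"
      by (simp add: field_simps)
    moreover have "((-3/2::real) gchoose (t - s)) = (-1)^(t - s) * fps_one_minus_X_powr (-3/2) $ (t - s)"
      by (simp add: fps_one_minus_X_powr_nth mult.assoc flip: power_mult_distrib)
    moreover have "(-1::real)^t = (-1)^s * (-1)^(t - s)"
      using that by (simp flip: power_add)
    ultimately show ?thesis
      unfolding S3_summand_eq [OF that(1,2)] alpha_power_double by (simp add: field_simps)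
  qed
  have "S3 t = (\<Sum>s=1..t. \<Sum>u=1..s. (-1)^t * (alpha^(2 * u) / fact (2 * u)
      * (ballot_coeff u (s + u) * fps_one_minus_X_powr (-3/2) $ (t - s))))"
    unfolding S3_def sum_distrib_left by (intro sum.cong refl summand) auto
  also have "\<dots> = (\<Sum>u=1..t. \<Sum>s=u..t. (-1)^t * (alpha^(2 * u) / fact (2 * u)
      * (ballot_coeff u (s + u) * fps_one_minus_X_powr (-3/2) $ (t - s))))"
    by (rule sum_triangle_swap)
  also have "\<dots> = (-1)^t *
      (\<Sum>u=1..t. alpha^(2 * u) / fact (2 * u) * (fps_Y ^ u * fps_one_minus_X_powr (-3/2)) $ (t + u))"
    unfolding fps_Y_power_times_nth_conv sum_distrib_left ..
  finally show ?thesis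
    by simp
qed

section \<open>Estimates for the coefficients of \<open>(1 - X)\<^sup>c\<close>\<close>

lemma fps_one_minus_X_powr_nth_step:
  "(c + 1 - of_nat n) * fps_one_minus_X_powr (c + 1) $ n = (c + 1) * fps_one_minus_X_powr c $ n"
  using gbinomial_absorb_comp [of "c + 1" n] by (simp add: fps_one_minus_X_powr_nth)

lemma fps_one_minus_X_powr_neg_three_halves_Suc:
  "fps_one_minus_X_powr (-3/2) $ Suc m = fps_one_minus_X_powr (-3/2) $ m * (real m + 3/2) / (real m + 1)"
proof -
  have step: "((-3/2::real) gchoose Suc m) = (-3/2 - real m) * ((-3/2) gchoose m) / (real m + 1)"
    using gbinomial_mult_1 [of "-3/2 :: real" m] by (simp add: field_simps)
  show ?thesis
    unfolding fps_one_minus_X_powr_nth step by (simp add: field_simps)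
qed

lemma fps_one_minus_X_powr_neg_three_halves_pos: "0 < fps_one_minus_X_powr (-3/2 :: real) $ m"
proof (induction m)
  case (Suc m)
  then show ?case
    unfolding fps_one_minus_X_powr_neg_three_halves_Suc by simp
qed (simp add: fps_one_minus_X_powr_nth)

lemma fps_one_minus_X_powr_half_integer_bound:
  assumes "1 \<le> i" "i \<le> n"
  shows "\<bar>fps_one_minus_X_powr (real i - 3/2) $ n\<bar>
           \<le> fps_one_minus_X_powr (-3/2) $ n * fact i / (2 * real n + 1)"
  using assms
proof (induction i rule: dec_induct)
  case base
  have "(- 1/2 - real n) * fps_one_minus_X_powr (- 1/2) $ n = - 1/2 * fps_one_minus_X_powr (-3/2) $ n"
    using fps_one_minus_X_powr_nth_step [of "-3/2 :: real" n] by simp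
  then have "fps_one_minus_X_powr (- 1/2) $ n = fps_one_minus_X_powr (-3/2) $ n / (2 * real n + 1)"
    by (simp add: field_simps)
  then show ?case
    using fps_one_minus_X_powr_neg_three_halves_pos [of n] by simp
next
  case (step k)
  let ?B = "\<lambda>k. fps_one_minus_X_powr (real k - 3/2) $ n"
  have "(real k - 1/2 - real n) * ?B (Suc k) = (real k - 1/2) * ?B k"
    using fps_one_minus_X_powr_nth_step [of "real k - 3/2" n] by simp
  then have "\<bar>real k - 1/2 - real n\<bar> * \<bar>?B (Suc k)\<bar> = \<bar>real k - 1/2\<bar> * \<bar>?B k\<bar>"
    by (simp only: abs_mult [symmetric])
  moreover have "\<bar>real k - 1/2 - real n\<bar> = real n + 1/2 - real k" "\<bar>real k - 1/2\<bar> = real k - 1/2"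
    using step.hyps step.prems by auto
  ultimately have eq: "(real n + 1/2 - real k) * \<bar>?B (Suc k)\<bar> = (real k - 1/2) * \<bar>?B k\<bar>"
    by simp
  have "1 \<le> real n + 1/2 - real k"
    using step.hyps step.prems by simp
  then have "\<bar>?B (Suc k)\<bar> \<le> (real n + 1/2 - real k) * \<bar>?B (Suc k)\<bar>"
    using mult_right_mono [of 1 _ "\<bar>?B (Suc k)\<bar>"] by simp
  also have "\<dots> = (real k - 1/2) * \<bar>?B k\<bar>"
    by (rule eq)
  also have "\<dots> \<le> (real k + 1) * (fps_one_minus_X_powr (-3/2) $ n * fact k / (2 * real n + 1))"
    using step by (intro mult_mono) auto
  also have "\<dots> = fps_one_minus_X_powr (-3/2) $ n * fact (Suc k) / (2 * real n + 1)"
    by (simp add: field_simps)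
  finally show ?case .
qed

lemma fps_one_minus_X_powr_neg_three_halves_ratio:
  assumes "2 \<le> t"
  defines "R \<equiv> \<lambda>u. fps_one_minus_X_powr (-3/2) $ (t + u) / fps_one_minus_X_powr (-3/2) $ t"
  shows "1 \<le> R u \<and> R u \<le> (5/4)^u \<and> R u - 1 \<le> real u * (5/4)^u / (2 * real t)"
proof (induction u)
  case 0
  then show ?case
    using fps_one_minus_X_powr_neg_three_halves_pos [of t] by (simp add: R_def)
next
  case (Suc u)
  define a where "a = 1 / (2 * (real (t + u) + 1))"
  have "R (Suc u) = R u * ((real (t + u) + 3/2) / (real (t + u) + 1))"
    unfolding R_def add_Suc_right fps_one_minus_X_powr_neg_three_halves_Suc by simp
  then have R_Suc: "R (Suc u) = R u * (1 + a)"
    by (simp add: a_def field_simps)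
  have a: "0 < a" "a \<le> 1/4" "a \<le> 1 / (2 * real t)"
    using assms(1) by (auto simp: a_def field_simps)
  have "R u \<le> R (Suc u)"
    using Suc.IH a by (simp add: R_Suc mult_le_cancel_left1)
  then have "1 \<le> R (Suc u)"
    using Suc.IH by linarith
  moreover have "R (Suc u) \<le> (5/4)^u * (5/4)"
    unfolding R_Suc using Suc.IH a by (intro mult_mono) auto
  moreover have "R (Suc u) - 1 \<le> real (Suc u) * (5/4)^Suc u / (2 * real t)"
  proof -
    have "R (Suc u) - 1 = (R u - 1) * (1 + a) + a"
      by (simp add: R_Suc algebra_simps)
    also have "\<dots> \<le> real u * (5/4)^u / (2 * real t) * (5/4) + (5/4)^Suc u / (2 * real t)"
    proof (intro add_mono mult_mono)
      have "(1::real) \<le> (5/4)^Suc u"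
        by (rule one_le_power) simp
      then have "1 / (2 * real t) \<le> (5/4)^Suc u / (2 * real t)"
        by (intro divide_right_mono) auto
      then show "a \<le> (5/4)^Suc u / (2 * real t)"
        using a(3) by linarith
    qed (use Suc.IH a in auto)
    also have "\<dots> = real (Suc u) * (5/4)^Suc u / (2 * real t)"
      by (simp add: add_divide_distrib [symmetric] algebra_simps)
    finally show ?thesis .
  qed
  ultimately show ?case
    by (simp add: mult.commute)
qed

definition relative_defect :: "nat \<Rightarrow> nat \<Rightarrow> real" where
  "relative_defect u t =
     (\<Sum>i\<le>u. real (2 * u choose (2 * i)) * fps_one_minus_X_powr (real i - 3/2) $ (t + u))
       / fps_one_minus_X_powr (-3/2) $ t - 1"

definition even_choose_fact_sum :: "nat \<Rightarrow> real" where
  "even_choose_fact_sum u = (\<Sum>i=1..u. real (2 * u choose (2 * i)) * fact i)"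

lemma even_binomial_tail_bound:
  assumes "2 \<le> t"
  shows "\<bar>\<Sum>i=1..u. real (2 * u choose (2 * i)) * fps_one_minus_X_powr (real i - 3/2) $ (t + u)\<bar>
           \<le> fps_one_minus_X_powr (-3/2) $ (t + u) * even_choose_fact_sum u / (2 * real t)"
proof -
  define q where "q = fps_one_minus_X_powr (-3/2 :: real) $ (t + u)"
  have "\<bar>real (2 * u choose (2 * i)) * fps_one_minus_X_powr (real i - 3/2) $ (t + u)\<bar>
      \<le> real (2 * u choose (2 * i)) * (q * fact i / (2 * real t))" if "i \<in> {1..u}" for i
  proof -
    have "\<bar>fps_one_minus_X_powr (real i - 3/2) $ (t + u)\<bar> \<le> q * fact i / (2 * real (t + u) + 1)"
      unfolding q_def using that by (intro fps_one_minus_X_powr_half_integer_bound) auto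
    also have "\<dots> \<le> q * fact i / (2 * real t)"
      using fps_one_minus_X_powr_neg_three_halves_pos [of "t + u"] assms
      by (intro divide_left_mono) (auto simp: q_def)
    finally show ?thesis
      unfolding abs_mult abs_of_nat by (rule mult_left_mono) simp
  qed
  then have "\<bar>\<Sum>i=1..u. real (2 * u choose (2 * i)) * fps_one_minus_X_powr (real i - 3/2) $ (t + u)\<bar>
      \<le> (\<Sum>i=1..u. real (2 * u choose (2 * i)) * (q * fact i / (2 * real t)))"
    by (intro order_trans [OF sum_abs sum_mono])
  also have "\<dots> = q * even_choose_fact_sum u / (2 * real t)"
    by (simp add: even_choose_fact_sum_def sum_distrib_left sum_divide_distrib mult_ac)
  finally show ?thesis
    by (simp add: q_def)
qed

lemma relative_defect_bound:
  assumes "2 \<le> t"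
  shows "\<bar>relative_defect u t\<bar> \<le> (5/4)^u * (real u + even_choose_fact_sum u) / (2 * real t)"
proof -
  define q where "q n = fps_one_minus_X_powr (-3/2 :: real) $ n" for n
  define R where "R = q (t + u) / q t"
  define E where "E = (\<Sum>i=1..u. real (2 * u choose (2 * i)) * fps_one_minus_X_powr (real i - 3/2) $ (t + u))"
  have q_pos: "0 < q n" for n
    unfolding q_def by (rule fps_one_minus_X_powr_neg_three_halves_pos)
  have R: "1 \<le> R" "R \<le> (5/4)^u" "R - 1 \<le> real u * (5/4)^u / (2 * real t)"
    using fps_one_minus_X_powr_neg_three_halves_ratio [OF assms, of u] by (simp_all add: R_def q_def)
  have "(\<Sum>i\<le>u. real (2 * u choose (2 * i)) * fps_one_minus_X_powr (real i - 3/2) $ (t + u)) = q (t + u) + E"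
    by (simp add: E_def q_def sum.atMost_shift sum.atLeast1_atMost_eq)
  then have defect: "relative_defect u t = (R - 1) + E / q t"
    using q_pos [of t] by (simp add: relative_defect_def R_def q_def add_divide_distrib)
  have "\<bar>E\<bar> / q t \<le> q (t + u) * even_choose_fact_sum u / (2 * real t) / q t"
    using even_binomial_tail_bound [OF assms, of u] q_pos [of t]
    by (intro divide_right_mono) (simp_all add: E_def q_def)
  also have "\<dots> = R * even_choose_fact_sum u / (2 * real t)"
    by (simp add: R_def)
  also have "\<dots> \<le> (5/4)^u * even_choose_fact_sum u / (2 * real t)"
    using R(2) by (intro divide_right_mono mult_right_mono) (auto simp: even_choose_fact_sum_def intro!: sum_nonneg)
  finally have "\<bar>E\<bar> / q t \<le> (5/4)^u * even_choose_fact_sum u / (2 * real t)" .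
  moreover have "\<bar>relative_defect u t\<bar> \<le> (R - 1) + \<bar>E\<bar> / q t"
    unfolding defect using R(1) q_pos [of t] by (simp add: abs_triangle_ineq [THEN order_trans])
  moreover have "(5/4)^u * (real u + even_choose_fact_sum u) / (2 * real t) =
      real u * (5/4)^u / (2 * real t) + (5/4)^u * even_choose_fact_sum u / (2 * real t)"
    by (simp add: ring_distribs add_divide_distrib mult.commute)
  ultimately show ?thesis
    using R(3) by linarith
qed

section \<open>The normalised expression as a series\<close>

lemma cosh_sums_even_powers: "(\<lambda>k. x^(2 * k) / fact (2 * k)) sums cosh (x :: real)"
proof -
  let ?f = "\<lambda>n. if even n then x^n /\<^sub>R fact n else 0"
  have "(\<lambda>k. ?f (2 * k)) sums cosh x \<longleftrightarrow> ?f sums cosh x"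
    by (rule sums_mono_reindex) (auto simp: strict_mono_def elim!: evenE)
  then show ?thesis
    using cosh_converges [of x] by (simp add: divide_inverse_commute)
qed

lemma x_sinh_sums_even_powers: "(\<lambda>k. 2 * real k * x^(2 * k) / fact (2 * k)) sums (x * sinh (x :: real))"
proof -
  define g where "g k = 2 * real k * x^(2 * k) / fact (2 * k)" for k
  let ?f = "\<lambda>n. if even n then 0 else x^n /\<^sub>R fact n"
  have "(\<lambda>k. ?f (2 * k + 1)) sums sinh x \<longleftrightarrow> ?f sums sinh x"
    by (rule sums_mono_reindex) (auto simp: strict_mono_def elim!: oddE)
  then have "(\<lambda>k. x * (x^(2 * k + 1) / fact (2 * k + 1))) sums (x * sinh x)"
    using sinh_converges [of x] by (intro sums_mult) (simp add: divide_inverse_commute)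
  moreover have "g (Suc k) = x * (x^(2 * k + 1) / fact (2 * k + 1))" for k
  proof -
    have "(fact (2 * Suc k) :: real) = 2 * real (Suc k) * fact (2 * k + 1)" "x^(2 * Suc k) = x * x^(2 * k + 1)"
      by (simp_all add: algebra_simps)
    then show ?thesis
      by (simp add: g_def)
  qed
  ultimately have "(\<lambda>k. g (Suc k)) sums (x * sinh x)"
    by simp
  then have "g sums (x * sinh x + g 0)"
    by (simp only: sums_Suc_iff)
  then show ?thesis
    by (simp add: g_def [abs_def])
qed

lemma normalized_S3_sums:
  "(\<lambda>u. alpha^(2 * u) / fact (2 * u) * relative_defect u t) sums
     (S3 t / ((-3/2) gchoose t) + (-1)^t / ((-3/2) gchoose t) * alpha * sinh alpha + 1 - cosh alpha)"
proof -
  define q where "q = fps_one_minus_X_powr (-3/2 :: real) $ t"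
  define c where "c u = alpha^(2 * u) / fact (2 * u)" for u
  define Z where "Z u = (fps_Y ^ u * fps_one_minus_X_powr (-3/2)) $ (t + u)" for u
  have q_pos: "0 < q"
    unfolding q_def by (rule fps_one_minus_X_powr_neg_three_halves_pos)
  have gchoose_eq: "((-3/2) gchoose t) = (-1)^t * q"
    by (simp add: q_def fps_one_minus_X_powr_nth)
  have defect_eq: "relative_defect u t = (Z u + 2 * real u) / q - 1" for u
    using fps_Y_power_times_nth_binomial [of u "t + u"] by (simp add: relative_defect_def Z_def q_def)
  have "(\<lambda>u. c u * Z u) sums (\<Sum>u\<le>t. c u * Z u)"
    by (rule sums_finite) (use fps_Y_power_times_nth_conv in \<open>auto simp: Z_def\<close>)
  also have "(\<Sum>u\<le>t. c u * Z u) = q + (-1)^t * S3 t"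
    by (simp add: S3_eq sum.atMost_shift sum.atLeast1_atMost_eq c_def Z_def q_def)
  finally have "(\<lambda>u. (c u * Z u + 2 * real u * c u) / q - c u) sums
      ((q + (-1)^t * S3 t + alpha * sinh alpha) / q - cosh alpha)"
    using x_sinh_sums_even_powers [of alpha] cosh_sums_even_powers [of alpha]
    by (intro sums_diff sums_divide sums_add) (simp_all add: c_def mult.assoc)
  moreover have "(c u * Z u + 2 * real u * c u) / q - c u = c u * relative_defect u t" for u
    using q_pos by (simp add: defect_eq field_simps)
  moreover have "(q + (-1)^t * S3 t + alpha * sinh alpha) / q - cosh alpha =
      S3 t / ((-3/2) gchoose t) + (-1)^t / ((-3/2) gchoose t) * alpha * sinh alpha + 1 - cosh alpha"
    unfolding gchoose_eq using q_pos by (simp add: field_simps)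
  ultimately show ?thesis
    by (simp add: c_def)
qed

section \<open>Numerical estimates\<close>

lemma alpha_sq_le: "alpha^2 \<le> 0.27416"
proof -
  have "pi^2 \<le> 3.1416^2"
    using pi_approx(2) by (intro power_mono) auto
  then show ?thesis
    by (simp add: alpha_def power_divide)
qed

lemma even_choose_fact_sum_le: "even_choose_fact_sum u \<le> 4^u * fact u"
proof -
  have "even_choose_fact_sum u \<le> (\<Sum>i=1..u. real (2 * u choose (2 * i))) * fact u"
    unfolding even_choose_fact_sum_def sum_distrib_right
    by (intro sum_mono mult_left_mono) (auto intro: fact_mono)
  also have "(\<Sum>i=1..u. real (2 * u choose (2 * i))) =
      (\<Sum>k\<in>(\<lambda>i. 2 * i) ` {1..u}. real (2 * u choose k))"
    by (simp add: sum.reindex inj_on_def)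
  also have "\<dots> \<le> (\<Sum>k\<le>2 * u. real (2 * u choose k))"
    by (intro sum_mono2) auto
  also have "\<dots> = 4^u"
    using choose_row_sum [of "2 * u"] by (simp flip: of_nat_sum add: power_mult)
  finally show ?thesis
    by simp
qed

lemma alpha_power_fact_ratio_bound:
  assumes "3 \<le> u"
  shows "(5 * alpha^2)^u * fact u / fact (2 * u) \<le> 0.045 * (1/2)^(u - 3)"
  using assms
proof (induction u rule: dec_induct)
  case base
  have "(alpha^2)^3 \<le> 0.27416^3"
    using alpha_sq_le by (intro power_mono) auto
  then have "alpha^6 \<le> 0.0207"
    by (simp add: power3_eq_cube)
  then show ?case
    by (simp add: power_mult_distrib fact_numeral)
next
  case (step k)
  have "(fact (2 * Suc k) :: real) = (2 * real k + 1) * (2 * real k + 2) * fact (2 * k)"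
    "(fact (Suc k) :: real) = (real k + 1) * fact k"
    by (simp_all add: algebra_simps)
  then have "(5 * alpha^2)^Suc k * fact (Suc k) / fact (2 * Suc k)
      = (5 * alpha^2)^k * fact k / fact (2 * k) * (5 * alpha^2 / (2 * (2 * real k + 1)))"
    by (simp add: divide_simps) (simp add: algebra_simps)
  also have "\<dots> \<le> 0.045 * (1/2)^(k - 3) * (1/2)"
  proof (intro mult_mono)
    show "5 * alpha^2 / (2 * (2 * real k + 1)) \<le> 1/2"
      using alpha_sq_le step.hyps by (simp add: field_simps)
  qed (use step.IH in simp_all)
  also have "\<dots> = 0.045 * (1/2)^(Suc k - 3)"
  proof -
    have "Suc k - 3 = Suc (k - 3)"
      using step.hyps by simp
    then show ?thesis
      by simp
  qed
  finally show ?case .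
qed

lemma series_term_le_power_fact_ratio:
  "alpha^(2 * u) / fact (2 * u) * (5/4)^u * (real u + even_choose_fact_sum u) / 2
     \<le> (5 * alpha^2)^u * fact u / fact (2 * u)"
proof -
  have "real u \<le> fact u"
    using fact_ge_self [of u] by (metis of_nat_fact of_nat_le_iff)
  also have "\<dots> \<le> 4^u * fact u"
    by simp
  finally have "real u + even_choose_fact_sum u \<le> 2 * (4^u * fact u)"
    using even_choose_fact_sum_le [of u] by simp
  then have "alpha^(2 * u) / fact (2 * u) * (5/4)^u * (real u + even_choose_fact_sum u) / 2
      \<le> alpha^(2 * u) / fact (2 * u) * (5/4)^u * (2 * (4^u * fact u)) / 2"
    by (intro divide_right_mono mult_left_mono) auto
  also have "\<dots> = (alpha^2)^u * ((5/4)^u * 4^u) * fact u / fact (2 * u)"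
    by (simp add: power_mult)
  also have "(5/4::real)^u * 4^u = 5^u"
    by (simp flip: power_mult_distrib)
  also have "(alpha^2)^u * 5^u * fact u / fact (2 * u) = (5 * alpha^2)^u * fact u / fact (2 * u)"
    by (simp add: power_mult_distrib)
  finally show ?thesis .
qed

lemma series_term_bound:
  assumes "1 \<le> u"
  shows "alpha^(2 * u) / fact (2 * u) * (5/4)^u * (real u + even_choose_fact_sum u) / 2 \<le> 0.18 * (1/2)^(u - 1)"
proof -
  consider "u = 1" | "u = 2" | "3 \<le> u"
    using assms by linarith
  then show ?thesis
  proof cases
    case 1
    then show ?thesis
      using alpha_sq_le by (simp add: even_choose_fact_sum_def)
  next
    case 2
    have "(alpha^2)^2 \<le> 0.27416^2"
      using alpha_sq_le by (intro power_mono) auto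
    also have "(0.27416::real)^2 \<le> 0.0752"
      by (simp add: power2_eq_square)
    finally have "alpha^4 \<le> 0.0752"
      by (simp flip: power_mult)
    moreover have "even_choose_fact_sum 2 = 8"
      by (simp add: even_choose_fact_sum_def numeral_eq_Suc)
    ultimately show ?thesis
      unfolding 2 power2_eq_square [of "5/4 :: real"] by (simp add: fact_numeral)
  next
    case 3
    have "u - 1 = (u - 3) + 2"
      using 3 by simp
    then have "0.045 * (1/2)^(u - 3) = (0.18 * (1/2)^(u - 1) :: real)"
      by (simp add: power_add)
    then show ?thesis
      using series_term_le_power_fact_ratio [of u] alpha_power_fact_ratio_bound [OF 3] by linarith
  qed
qed

lemma normalized_S3_term_bound:
  assumes "2 \<le> t" "1 \<le> u"
  shows "\<bar>alpha^(2 * u) / fact (2 * u) * relative_defect u t\<bar> \<le> 0.18 / real t * (1/2)^(u - 1)"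
proof -
  have "\<bar>alpha^(2 * u) / fact (2 * u) * relative_defect u t\<bar> =
      alpha^(2 * u) / fact (2 * u) * \<bar>relative_defect u t\<bar>"
    by (simp add: abs_mult)
  also have "\<dots> \<le> alpha^(2 * u) / fact (2 * u) * ((5/4)^u * (real u + even_choose_fact_sum u) / (2 * real t))"
    using relative_defect_bound [OF assms(1)] by (intro mult_left_mono) auto
  also have "\<dots> = (alpha^(2 * u) / fact (2 * u) * (5/4)^u * (real u + even_choose_fact_sum u) / 2) / real t"
    by simp
  also have "\<dots> \<le> 0.18 * (1/2)^(u - 1) / real t"
    using series_term_bound [OF assms(2)] assms(1) by (intro divide_right_mono) auto
  finally show ?thesis
    by simp
qed

theorem mainTheorem12:
  fixes t :: nat
  assumes "t \<ge> 2"
  shows "- 71 / (100 * real t) <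
           S3 t / ((-3/2::real) gchoose t) + (-1)^t / ((-3/2::real) gchoose t) * alpha * sinh alpha
             + 1 - cosh alpha
         \<and> S3 t / ((-3/2::real) gchoose t) + (-1)^t / ((-3/2::real) gchoose t) * alpha * sinh alpha
             + 1 - cosh alpha < 12 / (25 * real t)"
proof -
  define V where "V = S3 t / ((-3/2::real) gchoose t) + (-1)^t / ((-3/2::real) gchoose t) * alpha * sinh alpha
    + 1 - cosh alpha"
  define w where "w u = alpha^(2 * u) / fact (2 * u) * relative_defect u t" for u
  have "w 0 = 0"
    using fps_one_minus_X_powr_neg_three_halves_pos [of t] by (simp add: w_def relative_defect_def)
  moreover have "w sums V"
    unfolding w_def [abs_def] V_def by (rule normalized_S3_sums)
  ultimately have "(\<lambda>k. w (Suc k)) sums V"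
    by (simp add: sums_Suc_iff)
  moreover have "(\<lambda>k. 0.18 / real t * (1/2)^k) sums (0.36 / real t)"
    using sums_mult [OF geometric_sums [of "1/2 :: real"], of "0.18 / real t"] by simp
  moreover have "norm (w (Suc k)) \<le> 0.18 / real t * (1/2)^k" for k
    using normalized_S3_term_bound [OF assms, of "Suc k"] by (simp add: w_def)
  ultimately have "norm V \<le> 0.36 / real t"
    by (rule norm_sums_le)
  moreover have "- 71 / (100 * real t) < - (0.36 / real t)" "0.36 / real t < 12 / (25 * real t)"
    using assms by (simp_all add: divide_simps)
  ultimately show ?thesis
    unfolding V_def [symmetric] real_norm_def abs_le_iff by linarith
qed

end
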